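(* Let $\mathbb{U}_m\subset\mathbb{R}^m$ be a compact convex polytope and $\Delta=(\Delta_i)_{i\in I}$ a simplicial mesh of $\mathbb{R}^n\times\mathbb{U}_m$ such that (1) the family $D=(D_q)_{q\in\mathcal{Q}}$ of projections $p(\Delta_i)$ of the cells onto $\mathbb{R}^n$ is a simplicial mesh of $\mathbb{R}^n$, and (2) for all $i,j\in I$, either $p(\Delta_i)=p(\Delta_j)$ or the interiors of $p(\Delta_i)$ and $p(\Delta_j)$ are disjoint. For $q\in\mathcal{Q}$ let $\mathcal{K}(q)=\{i\in I : p(\Delta_i)=D_q\}$. Then for every $q\in\mathcal{Q}$, $$D_q\times\mathbb{U}_m=\bigcup_{q'\in\mathcal{K}(q)}\Delta_{q'}.$$
   Context: $p:\mathbb{R}^n\times\mathbb{R}^m\to\mathbb{R}^n$ denotes the orthogonal projection onto the state space $\mathbb{R}^n$. A simplicial mesh of a set $E\subset\mathbb{R}^k$ is a locally finite family of $k$-simplices covering $E$, any two of which intersect in a common face (possibly empty). *)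

theory Defs
  imports "HOL-Analysis.Analysis"
begin

definition simplicial_mesh :: "'i set \<Rightarrow> ('i \<Rightarrow> 'a::euclidean_space set) \<Rightarrow> 'a set \<Rightarrow> bool" where
  "simplicial_mesh I S E \<longleftrightarrow>
     (\<forall>i\<in>I. int DIM('a) simplex S i) \<and>
     (\<forall>x. \<exists>U. open U \<and> x \<in> U \<and> finite {i\<in>I. S i \<inter> U \<noteq> {}}) \<and>
     (\<Union>i\<in>I. S i) = E \<and>
     (\<forall>i\<in>I. \<forall>j\<in>I. (S i \<inter> S j) face_of S i \<and> (S i \<inter> S j) face_of S j)"

end

theory Submission
  imports Defs
begin

text \<open>Let \<open>W\<close> be the union of the cells lying over \<open>q\<close>. Every point of \<open>interior q \<times> U\<close>
  lies in some cell, whose projection is a full-dimensional convex set containing a point of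
  the open set \<open>interior q\<close>; hence the two projections have overlapping interiors and so
  coincide, i.e. the cell lies over \<open>q\<close>. Thus \<open>interior q \<times> U \<subseteq> W\<close>. By local finiteness \<open>W\<close>
  is closed, and \<open>q\<close>, being a full-dimensional simplex, is the closure of its interior, so
  \<open>q \<times> U \<subseteq> W\<close>.\<close>

lemma interior_simplex_full_dim_nonempty:
  fixes S :: "'a::euclidean_space set"
  assumes "int DIM('a) simplex S"
  shows "interior S \<noteq> {}"
proof -
  have "aff_dim S = int DIM('a)"
    using assms aff_dim_simplex by blast
  then have "affine hull S = UNIV" and "S \<noteq> {}"
    using aff_dim_eq_full by (auto simp: aff_dim_empty)
  then show ?thesis
    using assms convex_simplex rel_interior_eq_empty rel_interior_interior by metis
qed

lemma closure_interior_simplex_full_dim: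
  fixes S :: "'a::euclidean_space set"
  assumes "int DIM('a) simplex S"
  shows "closure (interior S) = S"
  using assms convex_simplex closed_simplex interior_simplex_full_dim_nonempty
    convex_closure_interior closure_closed by metis

lemma closed_UN_locally_finite:
  fixes A :: "'i \<Rightarrow> 'a::topological_space set"
  assumes "\<And>i. i \<in> J \<Longrightarrow> closed (A i)" and "J \<subseteq> I"
    and "\<And>x. \<exists>V. open V \<and> x \<in> V \<and> finite {i\<in>I. A i \<inter> V \<noteq> {}}"
  shows "closed (\<Union>i\<in>J. A i)"
proof -
  have "locally_finite_in euclidean (A ` J)"
    unfolding locally_finite_in_def
  proof (intro conjI ballI)
    fix x
    obtain V where V: "open V" "x \<in> V" "finite {i\<in>I. A i \<inter> V \<noteq> {}}"
      using assms(3) by blast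
    have "{S \<in> A ` J. S \<inter> V \<noteq> {}} \<subseteq> A ` {i\<in>I. A i \<inter> V \<noteq> {}}"
      using \<open>J \<subseteq> I\<close> by blast
    then have "finite {S \<in> A ` J. S \<inter> V \<noteq> {}}"
      using V(3) finite_surj by blast
    with V show "\<exists>V. openin euclidean V \<and> x \<in> V \<and> finite {S \<in> A ` J. S \<inter> V \<noteq> {}}"
      by auto
  qed simp
  then have "closedin euclidean (\<Union>(A ` J))"
    by (rule closedin_locally_finite_Union[rotated]) (use assms(1) in auto)
  then show ?thesis
    by simp
qed

lemma interior_Int_interior_convex_nonempty:
  fixes S T :: "'a::euclidean_space set"
  assumes "convex T" and "interior T \<noteq> {}" and "y \<in> T" and "y \<in> interior S"
  shows "interior S \<inter> interior T \<noteq> {}"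
proof -
  have "y \<in> closure (interior T)"
    using assms(1-3) convex_closure_interior closure_subset by blast
  then show ?thesis
    using assms(4) open_Int_closure_eq_empty[OF open_interior] by blast
qed

lemma interior_Times_subset_UN_cells_over:
  fixes \<Delta> :: "'i \<Rightarrow> ('a::euclidean_space \<times> 'b) set"
  assumes cover: "UNIV \<times> U \<subseteq> (\<Union>i\<in>I. \<Delta> i)"
    and proj: "\<And>j. j \<in> I \<Longrightarrow> convex (fst ` \<Delta> j) \<and> interior (fst ` \<Delta> j) \<noteq> {}"
    and disj: "\<And>j. j \<in> I \<Longrightarrow> fst ` \<Delta> j = q \<or> interior (fst ` \<Delta> j) \<inter> interior q = {}"
  shows "interior q \<times> U \<subseteq> (\<Union>j\<in>{j\<in>I. fst ` \<Delta> j = q}. \<Delta> j)"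
proof clarify
  fix y u assume y: "y \<in> interior q" and "u \<in> U"
  then obtain j where j: "j \<in> I" "(y, u) \<in> \<Delta> j"
    using cover by blast
  then have "interior q \<inter> interior (fst ` \<Delta> j) \<noteq> {}"
    using y proj interior_Int_interior_convex_nonempty by (metis fst_conv image_eqI)
  then have "fst ` \<Delta> j = q"
    using disj[OF \<open>j \<in> I\<close>] by blast
  with j show "(y, u) \<in> (\<Union>j\<in>{j\<in>I. fst ` \<Delta> j = q}. \<Delta> j)"
    by blast
qed

theorem lemma3:
  fixes U :: "'m::euclidean_space set"
    and I :: "'i set"
    and \<Delta> :: "'i \<Rightarrow> ('n::euclidean_space \<times> 'm) set"
  assumes "polytope U"
    and "simplicial_mesh I \<Delta> (UNIV \<times> U)"
    and "simplicial_mesh ((\<lambda>i. fst ` \<Delta> i) ` I) (\<lambda>D. D) (UNIV :: 'n set)"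
    and "\<forall>i\<in>I. \<forall>j\<in>I. fst ` \<Delta> i = fst ` \<Delta> j \<or>
                         interior (fst ` \<Delta> i) \<inter> interior (fst ` \<Delta> j) = {}"
  shows "\<forall>q\<in>(\<lambda>i. fst ` \<Delta> i) ` I. q \<times> U = (\<Union>i\<in>{i\<in>I. fst ` \<Delta> i = q}. \<Delta> i)"
proof
  fix q assume "q \<in> (\<lambda>i. fst ` \<Delta> i) ` I"
  then obtain i0 where i0: "i0 \<in> I" "q = fst ` \<Delta> i0" by blast
  let ?W = "\<Union>i\<in>{i\<in>I. fst ` \<Delta> i = q}. \<Delta> i"
  have cells: "\<forall>i\<in>I. int DIM('n \<times> 'm) simplex \<Delta> i"
    and locfin: "\<forall>x. \<exists>V. open V \<and> x \<in> V \<and> finite {i\<in>I. \<Delta> i \<inter> V \<noteq> {}}"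
    and cover: "(\<Union>i\<in>I. \<Delta> i) = UNIV \<times> U"
    using assms(2) unfolding simplicial_mesh_def by blast+
  have proj: "\<forall>i\<in>I. int DIM('n) simplex (fst ` \<Delta> i)"
    using assms(3) unfolding simplicial_mesh_def by blast
  have proj_full: "convex (fst ` \<Delta> i) \<and> interior (fst ` \<Delta> i) \<noteq> {}" if "i \<in> I" for i
    using proj that convex_simplex interior_simplex_full_dim_nonempty by metis
  have "closed ?W"
    by (rule closed_UN_locally_finite[where I = I]) (use cells closed_simplex locfin in auto)
  moreover have "interior q \<times> U \<subseteq> ?W"
    by (rule interior_Times_subset_UN_cells_over) (use cover proj_full assms(4) i0 in auto)
  ultimately have "closure (interior q \<times> U) \<subseteq> ?W"
    by (rule closure_minimal[rotated])
  moreover have "closure (interior q) = q"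
    using closure_interior_simplex_full_dim proj i0 by metis
  ultimately have "q \<times> U \<subseteq> ?W"
    using closure_subset[of U] by (auto simp: closure_Times)
  moreover have "?W \<subseteq> q \<times> U"
    using cover by force
  ultimately show "q \<times> U = ?W" by blast
qed

end
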